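(* Let $\Theta$ be a subset of a Polish space with metric $d$, equipped with its Borel $\sigma$-algebra, let $\nu$ be a probability measure on $\Theta$, and let $\{P^\theta:\theta\in\Theta\}$ be probability measures on $(\Omega,\mathcal{F})$ such that $\theta\mapsto P^\theta(A)$ is Borel measurable for each $A\in\mathcal{F}$ and $\theta\mapsto P^\theta$ is continuous in total variation (for every $\theta$ and $\varepsilon>0$ there is $\delta>0$ with $\sup_{A\in\mathcal{F}}|P^\theta(A)-P^{\theta'}(A)|<\varepsilon$ whenever $d(\theta,\theta')<\delta$). Let $\mathbb{P}(A)=\int_\Theta P^\theta(A)\,\nu(\mathrm{d}\theta)$ be the mixture probability measure. Then $\Theta^0:=\{\theta\in\Theta:P^\theta\not\ll\mathbb{P}\}$ is Borel measurable and $\nu(\Theta^0)=0$.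
   Context: $(\Omega,\mathcal{F})$ is a measurable space. *)

theory Defs
  imports "HOL-Probability.Probability"
begin

definition mixture :: "'b measure \<Rightarrow> 'a measure \<Rightarrow> ('a \<Rightarrow> 'b measure) \<Rightarrow> 'b measure" where
  "mixture M \<nu> P = measure_of (space M) (sets M) (\<lambda>A. \<integral>\<^sup>+ \<theta>. emeasure (P \<theta>) A \<partial>\<nu>)"

end

theory Submission
  imports Defs
begin

text \<open>If \<open>P\<^sup>\<theta>\<close> charges a null set \<open>A\<close> of the mixture, then by continuity in total variation so
  does every \<open>P\<^sup>\<theta>\<^sup>'\<close> with \<open>\<theta>'\<close> near \<open>\<theta>\<close>; hence \<open>\<Theta>\<^sup>0\<close> is relatively open, in particular Borel.
  By Lindel\<ouml>f's theorem countably many of these neighbourhoods cover \<open>\<Theta>\<^sup>0\<close>, and the union \<open>B\<close> of the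
  corresponding null sets is again a null set of the mixture with \<open>P\<^sup>\<theta>(B) > 0\<close> on all of \<open>\<Theta>\<^sup>0\<close>.
  Since \<open>\<integral> P\<^sup>\<theta>(B) \<nu>(d\<theta>) = 0\<close>, this forces \<open>\<nu>(\<Theta>\<^sup>0) = 0\<close>.\<close>

lemma sets_mixture: "sets (mixture M \<nu> P) = sets M"
  unfolding mixture_def by (simp add: sets.sigma_sets_eq sets.space_closed)

lemma emeasure_mixture:
  assumes P_sets: "\<And>\<theta>. \<theta> \<in> space \<nu> \<Longrightarrow> sets (P \<theta>) = sets M"
    and P_meas: "\<And>A. A \<in> sets M \<Longrightarrow> (\<lambda>\<theta>. emeasure (P \<theta>) A) \<in> borel_measurable \<nu>"
    and A: "A \<in> sets M"
  shows "emeasure (mixture M \<nu> P) A = (\<integral>\<^sup>+ \<theta>. emeasure (P \<theta>) A \<partial>\<nu>)"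
proof -
  have ca: "countably_additive (sets M) (\<lambda>A. \<integral>\<^sup>+ \<theta>. emeasure (P \<theta>) A \<partial>\<nu>)"
  proof (rule countably_additiveI)
    fix F :: "nat \<Rightarrow> _"
    assume F: "range F \<subseteq> sets M" "disjoint_family F" "\<Union> (range F) \<in> sets M"
    have "(\<Sum>i. \<integral>\<^sup>+ \<theta>. emeasure (P \<theta>) (F i) \<partial>\<nu>) = (\<integral>\<^sup>+ \<theta>. (\<Sum>i. emeasure (P \<theta>) (F i)) \<partial>\<nu>)"
      using F by (intro nn_integral_suminf[symmetric] P_meas) auto
    also have "\<dots> = (\<integral>\<^sup>+ \<theta>. emeasure (P \<theta>) (\<Union> (range F)) \<partial>\<nu>)"
      by (intro nn_integral_cong suminf_emeasure) (use F P_sets in auto)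
    finally show "(\<Sum>i. \<integral>\<^sup>+ \<theta>. emeasure (P \<theta>) (F i) \<partial>\<nu>) = (\<integral>\<^sup>+ \<theta>. emeasure (P \<theta>) (\<Union> (range F)) \<partial>\<nu>)" .
  qed
  show ?thesis
    unfolding mixture_def
    by (rule emeasure_measure_of_sigma[OF sets.sigma_algebra_axioms _ ca A]) (auto simp: positive_def)
qed

lemma AE_null_set_mixture:
  assumes P_sets: "\<And>\<theta>. \<theta> \<in> space \<nu> \<Longrightarrow> sets (P \<theta>) = sets M"
    and P_meas: "\<And>A. A \<in> sets M \<Longrightarrow> (\<lambda>\<theta>. emeasure (P \<theta>) A) \<in> borel_measurable \<nu>"
    and B: "B \<in> null_sets (mixture M \<nu> P)"
  shows "AE \<theta> in \<nu>. emeasure (P \<theta>) B = 0"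
proof -
  have B_sets: "B \<in> sets M"
    using B sets_mixture by blast
  have "(\<integral>\<^sup>+ \<theta>. emeasure (P \<theta>) B \<partial>\<nu>) = 0"
    using B emeasure_mixture[OF P_sets P_meas B_sets] by auto
  then show ?thesis
    using nn_integral_0_iff_AE[OF P_meas[OF B_sets]] by simp
qed

lemma not_absolutely_continuous_iff:
  assumes "finite_measure Q" "sets Q = sets \<mu>"
  shows "\<not> absolutely_continuous \<mu> Q \<longleftrightarrow> (\<exists>A\<in>null_sets \<mu>. 0 < measure Q A)"
proof -
  have "A \<notin> null_sets Q \<longleftrightarrow> 0 < measure Q A" if "A \<in> sets \<mu>" for A
    using that assms finite_measure.emeasure_eq_measure[OF assms(1)]
    by (auto simp: less_le)
  then show ?thesis
    unfolding absolutely_continuous_def by blast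
qed

lemma measure_pos_if_SUP_diff_less:
  assumes P: "finite_measure P" and Q: "finite_measure Q" and A: "A \<in> \<A>"
    and less: "(SUP B\<in>\<A>. \<bar>measure P B - measure Q B\<bar>) < measure P A"
  shows "0 < measure Q A"
proof -
  have "bdd_above ((\<lambda>B. \<bar>measure P B - measure Q B\<bar>) ` \<A>)"
  proof (rule bdd_aboveI2)
    fix B
    show "\<bar>measure P B - measure Q B\<bar> \<le> measure P (space P) + measure Q (space Q)"
      using finite_measure.bounded_measure[OF P, of B] finite_measure.bounded_measure[OF Q, of B]
        measure_nonneg[of P B] measure_nonneg[of Q B]
      by linarith
  qed
  then have "\<bar>measure P A - measure Q A\<bar> \<le> (SUP B\<in>\<A>. \<bar>measure P B - measure Q B\<bar>)"
    using A by (rule cSUP_upper2) simp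
  with less show ?thesis
    by linarith
qed

lemma openin_sets_restrict_space_borel:
  assumes "openin (top_of_set S) T"
  shows "T \<in> sets (restrict_space borel S)"
proof -
  obtain U where "open U" "T = S \<inter> U"
    using assms unfolding openin_open by blast
  then show ?thesis
    unfolding sets_restrict_space using borel_open by blast
qed

definition charging_params :: "'a set \<Rightarrow> ('a \<Rightarrow> 'b measure) \<Rightarrow> 'b set set \<Rightarrow> 'a set" where
  "charging_params \<Theta> P \<N> = {\<theta>\<in>\<Theta>. \<exists>A\<in>\<N>. 0 < measure (P \<theta>) A}"

lemma not_absolutely_continuous_eq_charging_params:
  assumes "\<And>\<theta>. \<theta> \<in> \<Theta> \<Longrightarrow> finite_measure (P \<theta>)"
    and "\<And>\<theta>. \<theta> \<in> \<Theta> \<Longrightarrow> sets (P \<theta>) = sets \<mu>"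
  shows "{\<theta>\<in>\<Theta>. \<not> absolutely_continuous \<mu> (P \<theta>)} = charging_params \<Theta> P (null_sets \<mu>)"
  using not_absolutely_continuous_iff[OF assms] unfolding charging_params_def by blast

lemma tv_continuous_charging_params_locally:
  fixes \<Theta> :: "'a::metric_space set"
  assumes fin: "\<And>\<theta>. \<theta> \<in> \<Theta> \<Longrightarrow> finite_measure (P \<theta>)"
    and tv_cont: "\<forall>\<theta>\<in>\<Theta>. \<forall>\<epsilon>>0. \<exists>\<delta>>0. \<forall>\<theta>'\<in>\<Theta>. dist \<theta> \<theta>' < \<delta> \<longrightarrow>
        (SUP A\<in>\<A>. \<bar>measure (P \<theta>) A - measure (P \<theta>') A\<bar>) < \<epsilon>"
    and \<N>: "\<N> \<subseteq> \<A>" and \<theta>: "\<theta> \<in> charging_params \<Theta> P \<N>"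
  shows "\<exists>U. open U \<and> \<theta> \<in> U \<and> (\<exists>A\<in>\<N>. \<forall>\<theta>'\<in>U \<inter> \<Theta>. 0 < measure (P \<theta>') A)"
proof -
  obtain A where "\<theta> \<in> \<Theta>" "A \<in> \<N>" and pos: "0 < measure (P \<theta>) A"
    using \<theta> unfolding charging_params_def by blast
  then obtain \<delta> where "\<delta> > 0" and \<delta>: "\<forall>\<theta>'\<in>\<Theta>. dist \<theta> \<theta>' < \<delta> \<longrightarrow>
      (SUP A\<in>\<A>. \<bar>measure (P \<theta>) A - measure (P \<theta>') A\<bar>) < measure (P \<theta>) A"
    using tv_cont by blast
  have "0 < measure (P \<theta>') A" if "\<theta>' \<in> ball \<theta> \<delta> \<inter> \<Theta>" for \<theta>'
    using that \<delta> \<N> \<open>A \<in> \<N>\<close>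
    by (intro measure_pos_if_SUP_diff_less[where \<A> = \<A>, OF fin[OF \<open>\<theta> \<in> \<Theta>\<close>] fin]) auto
  then show ?thesis
    using \<open>\<delta> > 0\<close> \<open>A \<in> \<N>\<close> open_ball centre_in_ball by blast
qed

lemma openin_charging_params:
  assumes locally: "\<And>\<theta>. \<theta> \<in> charging_params \<Theta> P \<N> \<Longrightarrow>
      \<exists>U. open U \<and> \<theta> \<in> U \<and> (\<exists>A\<in>\<N>. \<forall>\<theta>'\<in>U \<inter> \<Theta>. 0 < measure (P \<theta>') A)"
  shows "openin (top_of_set \<Theta>) (charging_params \<Theta> P \<N>)"
proof (subst openin_subopen, intro ballI)
  fix \<theta> assume \<theta>: "\<theta> \<in> charging_params \<Theta> P \<N>"
  then obtain U A where U: "open U" "\<theta> \<in> U" and "A \<in> \<N>" "\<forall>\<theta>'\<in>U \<inter> \<Theta>. 0 < measure (P \<theta>') A"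
    using locally by blast
  then have "\<Theta> \<inter> U \<subseteq> charging_params \<Theta> P \<N>"
    unfolding charging_params_def by blast
  moreover have "\<theta> \<in> \<Theta> \<inter> U"
    using \<theta> U(2) unfolding charging_params_def by blast
  ultimately show "\<exists>V. openin (top_of_set \<Theta>) V \<and> \<theta> \<in> V \<and> V \<subseteq> charging_params \<Theta> P \<N>"
    using openin_open_Int[OF U(1)] by blast
qed

lemma Lindelof_charging_params:
  fixes \<Theta> :: "'a::second_countable_topology set"
  assumes fin: "\<And>\<theta>. \<theta> \<in> \<Theta> \<Longrightarrow> finite_measure (P \<theta>)"
    and P_sets: "\<And>\<theta>. \<theta> \<in> \<Theta> \<Longrightarrow> sets (P \<theta>) = sets \<mu>"
    and locally: "\<And>\<theta>. \<theta> \<in> charging_params \<Theta> P (null_sets \<mu>) \<Longrightarrow>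
      \<exists>U. open U \<and> \<theta> \<in> U \<and> (\<exists>A\<in>null_sets \<mu>. \<forall>\<theta>'\<in>U \<inter> \<Theta>. 0 < measure (P \<theta>') A)"
  obtains B where "B \<in> null_sets \<mu>" "\<And>\<theta>. \<theta> \<in> charging_params \<Theta> P (null_sets \<mu>) \<Longrightarrow> 0 < measure (P \<theta>) B"
proof -
  define \<G> where "\<G> = {U. open U \<and> (\<exists>A\<in>null_sets \<mu>. \<forall>\<theta>\<in>U \<inter> \<Theta>. 0 < measure (P \<theta>) A)}"
  obtain \<G>' where \<G>': "\<G>' \<subseteq> \<G>" "countable \<G>'" "\<Union>\<G>' = \<Union>\<G>"
    using Lindelof[of \<G>] by (auto simp: \<G>_def)
  have "\<forall>U\<in>\<G>'. \<exists>A\<in>null_sets \<mu>. \<forall>\<theta>\<in>U \<inter> \<Theta>. 0 < measure (P \<theta>) A"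
    using \<G>'(1) unfolding \<G>_def by blast
  then obtain A where A: "\<And>U. U \<in> \<G>' \<Longrightarrow> A U \<in> null_sets \<mu> \<and> (\<forall>\<theta>\<in>U \<inter> \<Theta>. 0 < measure (P \<theta>) (A U))"
    by metis
  define B where "B = (\<Union>U\<in>\<G>'. A U)"
  have "B \<in> null_sets \<mu>"
    unfolding B_def using A \<G>'(2) by (intro null_sets_UN') auto
  moreover have "0 < measure (P \<theta>) B" if \<theta>: "\<theta> \<in> charging_params \<Theta> P (null_sets \<mu>)" for \<theta>
  proof -
    have "\<theta> \<in> \<Theta>"
      using \<theta> unfolding charging_params_def by blast
    have "\<theta> \<in> \<Union>\<G>"
      using locally[OF \<theta>] unfolding \<G>_def by blast
    then obtain U where U: "U \<in> \<G>'" "\<theta> \<in> U"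
      using \<G>'(3) by blast
    then have "0 < measure (P \<theta>) (A U)"
      using A \<open>\<theta> \<in> \<Theta>\<close> by blast
    also have "\<dots> \<le> measure (P \<theta>) B"
      using U \<open>B \<in> null_sets \<mu>\<close> P_sets[OF \<open>\<theta> \<in> \<Theta>\<close>]
      by (intro finite_measure.finite_measure_mono[OF fin[OF \<open>\<theta> \<in> \<Theta>\<close>]]) (auto simp: B_def)
    finally show ?thesis .
  qed
  ultimately show thesis
    using that by blast
qed

theorem lemma6p9:
  fixes \<Theta> :: "'a::polish_space set"
    and \<nu> :: "'a measure"
    and M :: "'b measure"
    and P :: "'a \<Rightarrow> 'b measure"
  assumes nu_sets: "sets \<nu> = sets (restrict_space borel \<Theta>)"
    and nu_space: "space \<nu> = \<Theta>"
    and nu_prob: "prob_space \<nu>"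
    and P_prob: "\<And>\<theta>. \<theta> \<in> \<Theta> \<Longrightarrow> prob_space (P \<theta>)"
    and P_space: "\<And>\<theta>. \<theta> \<in> \<Theta> \<Longrightarrow> space (P \<theta>) = space M"
    and P_sets: "\<And>\<theta>. \<theta> \<in> \<Theta> \<Longrightarrow> sets (P \<theta>) = sets M"
    and P_meas: "\<And>A. A \<in> sets M \<Longrightarrow> (\<lambda>\<theta>. emeasure (P \<theta>) A) \<in> borel_measurable \<nu>"
    and P_tv_cont: "\<forall>\<theta>\<in>\<Theta>. \<forall>\<epsilon>>0. \<exists>\<delta>>0. \<forall>\<theta>'\<in>\<Theta>. dist \<theta> \<theta>' < \<delta> \<longrightarrow>
        (SUP A\<in>sets M. \<bar>measure (P \<theta>) A - measure (P \<theta>') A\<bar>) < \<epsilon>"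
  shows "{\<theta>\<in>\<Theta>. \<not> absolutely_continuous (mixture M \<nu> P) (P \<theta>)} \<in> sets \<nu>
    \<and> emeasure \<nu> {\<theta>\<in>\<Theta>. \<not> absolutely_continuous (mixture M \<nu> P) (P \<theta>)} = 0"
proof -
  let ?mix = "mixture M \<nu> P"
  let ?\<Theta>\<^sub>0 = "charging_params \<Theta> P (null_sets ?mix)"
  have fin: "\<And>\<theta>. \<theta> \<in> \<Theta> \<Longrightarrow> finite_measure (P \<theta>)"
    using P_prob unfolding prob_space_def by blast
  have P_sets_mix: "\<And>\<theta>. \<theta> \<in> \<Theta> \<Longrightarrow> sets (P \<theta>) = sets ?mix"
    by (simp add: P_sets sets_mixture)
  have null_sets_mix: "null_sets ?mix \<subseteq> sets M"
    by (intro subsetI) (metis null_setsD2 sets_mixture)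
  have locally: "\<exists>U. open U \<and> \<theta> \<in> U \<and> (\<exists>A\<in>null_sets ?mix. \<forall>\<theta>'\<in>U \<inter> \<Theta>. 0 < measure (P \<theta>') A)"
    if "\<theta> \<in> ?\<Theta>\<^sub>0" for \<theta>
    using tv_continuous_charging_params_locally[OF fin P_tv_cont null_sets_mix that] .
  have \<Theta>\<^sub>0_sets: "?\<Theta>\<^sub>0 \<in> sets \<nu>"
    unfolding nu_sets by (intro openin_sets_restrict_space_borel openin_charging_params locally)
  obtain B where B: "B \<in> null_sets ?mix" "\<And>\<theta>. \<theta> \<in> ?\<Theta>\<^sub>0 \<Longrightarrow> 0 < measure (P \<theta>) B"
    using Lindelof_charging_params[OF fin P_sets_mix locally] by blast
  have "AE \<theta> in \<nu>. emeasure (P \<theta>) B = 0"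
    using AE_null_set_mixture[OF P_sets[folded nu_space] P_meas B(1)] .
  then have "AE \<theta> in \<nu>. \<theta> \<notin> ?\<Theta>\<^sub>0"
    by eventually_elim (use B(2) in \<open>force simp: measure_def\<close>)
  then have "?\<Theta>\<^sub>0 \<in> null_sets \<nu>"
    using AE_iff_null_sets[OF \<Theta>\<^sub>0_sets] by blast
  moreover have "{\<theta>\<in>\<Theta>. \<not> absolutely_continuous ?mix (P \<theta>)} = ?\<Theta>\<^sub>0"
    by (rule not_absolutely_continuous_eq_charging_params[OF fin P_sets_mix])
  ultimately show ?thesis
    by auto
qed

end
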